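(* For every finite graph $G$ we have $\chi_{alg}(G)\le 4$; equivalently, for every finite graph $G$ the algebra $\mathcal A(G,K_4)$ is nonzero (i.e. $1\notin\mathcal I(G,K_4)$).
   Context: Graphs are finite, with no loops and symmetric edge set $E(G)\subseteq V(G)\times V(G)$; $K_c$ is the complete graph on $c$ vertices. For finite sets $I,O$ with $|I|=n$, $|O|=m$, identify $O$ with $\{0,\dots,m-1\}$. Let $\mathbb F(n,m)$ be the free product of $n$ copies of the cyclic group of order $m$, with generators $u_v$ ($v\in I$), $u_v^m=1$, and let $\mathbb C[\mathbb F(n,m)]$ be its complex group $*$-algebra ($g^*=g^{-1}$). With $\omega=e^{2\pi i/m}$ put $e_{v,a}=\frac1m\sum_{k=0}^{m-1}(\omega^{-a}u_v)^k$ (self-adjoint idempotents with $\sum_a e_{v,a}=1$). For graphs $G,H$, the graph homomorphism game has $I=V(G)$, $O=V(H)$ and rule $\lambda(v,w,a,b)=0$ iff either ($v=w$ and $a\neq b$) or ($(v,w)\in E(G)$ and $(a,b)\notin E(H)$), and $\lambda=1$ otherwise. $\mathcal I(G,H)$ is the two-sided $*$-ideal of $\mathbb C[\mathbb F(n,m)]$ generated by $\{e_{v,a}e_{w,b}:\lambda(v,w,a,b)=0\}$ and $\mathcal A(G,H)=\mathbb C[\mathbb F(n,m)]/\mathcal I(G,H)$. The algebraic chromatic number is $\chi_{alg}(G)=\min\{c:\mathcal A(G,K_c)\neq 0\}$. *)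

theory Defs
  imports Complex_Main
begin

section \<open>The free product F(I,m) of copies of Z/m, realised by reduced words\<close>

text \<open>A word is a list of letters (v,k), standing for u_v^k. Reduced words have
  v in I, 0 < k < m, and consecutive letters with distinct generator index.\<close>

type_synonym 'v word = "('v \<times> nat) list"

definition reduced_word :: "'v set \<Rightarrow> nat \<Rightarrow> 'v word \<Rightarrow> bool" where
  "reduced_word I m w \<longleftrightarrow>
     (\<forall>(v,k)\<in>set w. v \<in> I \<and> 0 < k \<and> k < m) \<and> successively (\<lambda>x y. fst x \<noteq> fst y) w"

text \<open>Left multiplication of a reduced word by the group element u_v^k.\<close>
fun ins_letter :: "nat \<Rightarrow> 'v \<times> nat \<Rightarrow> 'v word \<Rightarrow> 'v word" where
  "ins_letter m (v,k) [] = (if k mod m = 0 then [] else [(v, k mod m)])"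
| "ins_letter m (v,k) ((u,j) # w) =
     (if u = v then (if (k + j) mod m = 0 then w else (v, (k + j) mod m) # w)
      else if k mod m = 0 then (u,j) # w else (v, k mod m) # (u,j) # w)"

definition word_mult :: "nat \<Rightarrow> 'v word \<Rightarrow> 'v word \<Rightarrow> 'v word" where
  "word_mult m x y = foldr (ins_letter m) x y"

definition word_inv :: "nat \<Rightarrow> 'v word \<Rightarrow> 'v word" where
  "word_inv m w = rev (map (\<lambda>(v,k). (v, m - k)) w)"

definition galg :: "'v set \<Rightarrow> nat \<Rightarrow> ('v word \<Rightarrow> complex) set" where
  "galg I m = {f. finite {w. f w \<noteq> 0} \<and> (\<forall>w. f w \<noteq> 0 \<longrightarrow> reduced_word I m w)}"

definition gadd :: "('v word \<Rightarrow> complex) \<Rightarrow> ('v word \<Rightarrow> complex) \<Rightarrow> ('v word \<Rightarrow> complex)" where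
  "gadd f g = (\<lambda>w. f w + g w)"

definition gscale :: "complex \<Rightarrow> ('v word \<Rightarrow> complex) \<Rightarrow> ('v word \<Rightarrow> complex)" where
  "gscale c f = (\<lambda>w. c * f w)"

definition gmult :: "nat \<Rightarrow> ('v word \<Rightarrow> complex) \<Rightarrow> ('v word \<Rightarrow> complex) \<Rightarrow> ('v word \<Rightarrow> complex)" where
  "gmult m f g = (\<lambda>w. \<Sum>(x,y)\<in>{(x,y). f x \<noteq> 0 \<and> g y \<noteq> 0 \<and> word_mult m x y = w}. f x * g y)"

definition gstar :: "nat \<Rightarrow> ('v word \<Rightarrow> complex) \<Rightarrow> ('v word \<Rightarrow> complex)" where
  "gstar m f = (\<lambda>w. cnj (f (word_inv m w)))"

definition gelem :: "'v word \<Rightarrow> ('v word \<Rightarrow> complex)" where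
  "gelem g = (\<lambda>w. if w = g then 1 else 0)"

definition gone :: "'v word \<Rightarrow> complex" where
  "gone = gelem []"

definition ugen :: "nat \<Rightarrow> 'v \<Rightarrow> 'v word" where
  "ugen m v = ins_letter m (v, 1) []"

primrec gpow :: "nat \<Rightarrow> ('v word \<Rightarrow> complex) \<Rightarrow> nat \<Rightarrow> ('v word \<Rightarrow> complex)" where
  "gpow m f 0 = gone"
| "gpow m f (Suc k) = gmult m (gpow m f k) f"

definition omega :: "nat \<Rightarrow> complex" where
  "omega m = exp (2 * of_real pi * \<i> / of_nat m)"

definition eproj :: "nat \<Rightarrow> 'v \<Rightarrow> nat \<Rightarrow> ('v word \<Rightarrow> complex)" where
  "eproj m v a = (\<lambda>w. (1 / of_nat m) *
      (\<Sum>k<m. gpow m (gscale (inverse (omega m) ^ a) (gelem (ugen m v))) k w))"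

inductive_set star_ideal :: "'v set \<Rightarrow> nat \<Rightarrow> ('v word \<Rightarrow> complex) set \<Rightarrow> ('v word \<Rightarrow> complex) set"
  for I m S where
  gen: "s \<in> S \<Longrightarrow> s \<in> star_ideal I m S"
| zero: "(\<lambda>w. 0) \<in> star_ideal I m S"
| add: "x \<in> star_ideal I m S \<Longrightarrow> y \<in> star_ideal I m S \<Longrightarrow> gadd x y \<in> star_ideal I m S"
| lmult: "a \<in> galg I m \<Longrightarrow> x \<in> star_ideal I m S \<Longrightarrow> gmult m a x \<in> star_ideal I m S"
| rmult: "a \<in> galg I m \<Longrightarrow> x \<in> star_ideal I m S \<Longrightarrow> gmult m x a \<in> star_ideal I m S"
| star: "x \<in> star_ideal I m S \<Longrightarrow> gstar m x \<in> star_ideal I m S"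

definition is_graph :: "'v set \<Rightarrow> ('v \<times> 'v) set \<Rightarrow> bool" where
  "is_graph V E \<longleftrightarrow> finite V \<and> E \<subseteq> V \<times> V \<and> sym E \<and> (\<forall>v. (v,v) \<notin> E)"

definition K_verts :: "nat \<Rightarrow> nat set" where
  "K_verts c = {0..<c}"

definition K_edges :: "nat \<Rightarrow> (nat \<times> nat) set" where
  "K_edges c = {(a,b). a < c \<and> b < c \<and> a \<noteq> b}"

definition hom_rule :: "('v \<times> 'v) set \<Rightarrow> (nat \<times> nat) set \<Rightarrow> 'v \<Rightarrow> 'v \<Rightarrow> nat \<Rightarrow> nat \<Rightarrow> bool" where
  "hom_rule E F v w a b \<longleftrightarrow> \<not> ((v = w \<and> a \<noteq> b) \<or> ((v,w) \<in> E \<and> (a,b) \<notin> F))"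

text \<open>Ideal I(G,H) for H with vertex set {0..<m} (O identified with {0,...,m-1}).\<close>
definition hom_ideal :: "'v set \<Rightarrow> ('v \<times> 'v) set \<Rightarrow> nat \<Rightarrow> (nat \<times> nat) set \<Rightarrow> ('v word \<Rightarrow> complex) set" where
  "hom_ideal V E m F = star_ideal V m
     {gmult m (eproj m v a) (eproj m w b) | v w a b.
        v \<in> V \<and> w \<in> V \<and> a < m \<and> b < m \<and> \<not> hom_rule E F v w a b}"

text \<open>A(G,H) = C[F(n,m)] / I(G,H) is nonzero.\<close>
definition hom_alg_nonzero :: "'v set \<Rightarrow> ('v \<times> 'v) set \<Rightarrow> nat \<Rightarrow> (nat \<times> nat) set \<Rightarrow> bool" where
  "hom_alg_nonzero V E m F \<longleftrightarrow> (\<exists>x \<in> galg V m. x \<notin> hom_ideal V E m F)"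

definition chi_alg :: "'v set \<Rightarrow> ('v \<times> 'v) set \<Rightarrow> nat" where
  "chi_alg V E = (LEAST c. 1 \<le> c \<and> hom_alg_nonzero V E c (K_edges c))"

end

(*
  Everything happens in a linear representation of C[F(V,4)] on the space of all complex
  functions on words over V.  There u_v acts as sum_a i^a P_(v,a) for linear maps P_(v,a),
  a < 4, forming a resolution of the identity (so e_(v,a) acts as P_(v,a)), with
  P_(v,a) P_(v,b) = 0 for a ~= b and P_(v,a) P_(w,a) = 0 for all v ~= w: an algebraic
  4-colouring of the complete graph on V.  Hence every generator of I(G,K_4), and with it the
  whole *-ideal, acts as zero, both directly and composed with the involution, while 1 acts as
  the identity.

  The P_(v,a) are built from "prepend v" (L_v, create v), "strip a leading w" (S_w) and
  operators A_v, alpha_v (A_op, alpha_op) defined by simultaneous recursion on word length: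
    A_v = 1 - L_v alpha_v,    alpha_v = A_v (2 S_v - sum_w A_w S_w).
  Then A_v is a projection onto a subspace R_v, the whole space is R_v + L_v R_v, alpha_v
  inverts L_v on R_v, and alpha_v L_w = - A_v A_w for v ~= w.  The four P_(v,a) project onto
  the +-1 eigenspaces of the involution r + L_v r' |-> r' + L_v r, separately on words of even
  and of odd length; the identity for alpha_v L_w makes equal colours at distinct vertices
  orthogonal.
*)

theory Submission
  imports Defs
begin

section \<open>Linear operators on complex-valued functions\<close>

type_synonym 'x vec = "'x \<Rightarrow> complex"

definition lin :: "('x vec \<Rightarrow> 'y vec) \<Rightarrow> bool" where
  "lin T \<longleftrightarrow> (\<forall>f g. T (\<lambda>u. f u + g u) = (\<lambda>u. T f u + T g u)) \<and>
              (\<forall>c f. T (\<lambda>u. c * f u) = (\<lambda>u. c * T f u))"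

lemma lin_add: "lin T \<Longrightarrow> T (\<lambda>u. f u + g u) u = T f u + T g u"
  unfolding lin_def by metis

lemma lin_scale: "lin T \<Longrightarrow> T (\<lambda>u. c * f u) u = c * T f u"
  unfolding lin_def by metis

lemma lin_zero: "lin T \<Longrightarrow> T (\<lambda>u. 0) u = 0"
  using lin_scale[of T 0 "\<lambda>u. 0"] by simp

lemma lin_diff: "lin T \<Longrightarrow> T (\<lambda>u. f u - g u) u = T f u - T g u"
  using lin_add[of T f "\<lambda>u. - g u"] lin_scale[of T "-1" g] by simp

lemma lin_half: "lin T \<Longrightarrow> T (\<lambda>u. f u / 2) u = T f u / 2"
  using lin_scale[of T "1 / 2" f] by simp

lemma lin_sum:
  assumes "lin T" and "finite K"
  shows "T (\<lambda>u. \<Sum>k\<in>K. h k u) u = (\<Sum>k\<in>K. T (h k) u)"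
  using assms(2)
proof (induction K arbitrary: u rule: finite_induct)
  case empty
  show ?case using lin_zero[OF assms(1)] by simp
next
  case (insert k K)
  then show ?case using lin_add[OF assms(1), of "h k" "\<lambda>u. \<Sum>k\<in>K. h k u"] by simp
qed

lemma lin_id: "lin (\<lambda>f. f)"
  unfolding lin_def by simp

lemma lin_comp: "lin S \<Longrightarrow> lin T \<Longrightarrow> lin (\<lambda>f. S (T f))"
  unfolding lin_def by simp

lemma lin_add_ops: "lin S \<Longrightarrow> lin T \<Longrightarrow> lin (\<lambda>f u. S f u + T f u)"
  unfolding lin_def by (simp add: algebra_simps)

lemma lin_diff_ops: "lin S \<Longrightarrow> lin T \<Longrightarrow> lin (\<lambda>f u. S f u - T f u)"
  unfolding lin_def by (simp add: algebra_simps)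

lemma lin_scale_ops: "lin S \<Longrightarrow> lin (\<lambda>f u. c * S f u)"
  unfolding lin_def by (simp add: algebra_simps)

lemma lin_sum_ops:
  assumes "finite K" and "\<And>k. k \<in> K \<Longrightarrow> lin (T k)"
  shows "lin (\<lambda>f u. \<Sum>k\<in>K. T k f u)"
  using assms unfolding lin_def by (simp add: sum.distrib sum_distrib_left)

lemma lin_eval_shift: "lin (\<lambda>f u. f (g u))"
  unfolding lin_def by simp

section \<open>Representations of the group algebra from actions of the cyclic factors\<close>

definition word_over :: "'v set \<Rightarrow> nat \<Rightarrow> 'v word \<Rightarrow> bool" where
  "word_over I m w \<longleftrightarrow> (\<forall>(v, k)\<in>set w. v \<in> I \<and> 0 < k \<and> k < m)"

lemma word_over_Nil [simp]: "word_over I m []"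
  and word_over_Cons [simp]: "word_over I m ((v, k) # w) \<longleftrightarrow> v \<in> I \<and> 0 < k \<and> k < m \<and> word_over I m w"
  by (simp_all add: word_over_def)

lemma word_over_ins_letter:
  assumes "0 < m" and "v \<in> I" and "word_over I m w"
  shows "word_over I m (ins_letter m (v, k) w)"
proof (cases w)
  case Nil
  then show ?thesis
    using assms by auto
next
  case (Cons l w')
  then show ?thesis
    using assms by (cases l) auto
qed

lemma word_over_mult:
  "0 < m \<Longrightarrow> word_over I m x \<Longrightarrow> word_over I m y \<Longrightarrow> word_over I m (word_mult m x y)"
proof (induction x)
  case Nil
  then show ?case by (simp add: word_mult_def)
next
  case (Cons l x)
  then show ?case
    by (cases l) (simp add: word_mult_def word_over_ins_letter)
qed

lemma word_inv_Nil [simp]: "word_inv m [] = []"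
  by (simp add: word_inv_def)

lemma word_inv_Cons: "word_inv m ((v, k) # w) = word_inv m w @ [(v, m - k)]"
  by (simp add: word_inv_def)

lemma word_over_inv: "word_over I m (word_inv m w) \<longleftrightarrow> word_over I m w"
  by (auto simp: word_over_def word_inv_def)

lemma word_inv_inv: "word_over I m w \<Longrightarrow> word_inv m (word_inv m w) = w"
  by (induction w) (auto simp: word_inv_def)

definition supp :: "('v word \<Rightarrow> complex) \<Rightarrow> 'v word set" where
  "supp f = {w. f w \<noteq> 0}"

definition fin_over :: "'v set \<Rightarrow> nat \<Rightarrow> ('v word \<Rightarrow> complex) \<Rightarrow> bool" where
  "fin_over I m f \<longleftrightarrow> finite (supp f) \<and> (\<forall>w\<in>supp f. word_over I m w)"

lemma galg_fin_over: "f \<in> galg I m \<Longrightarrow> fin_over I m f"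
  by (auto simp: galg_def fin_over_def supp_def reduced_word_def word_over_def)

lemma supp_gmult: "supp (gmult m f h) \<subseteq> (\<lambda>(x, y). word_mult m x y) ` (supp f \<times> supp h)"
proof
  fix w
  assume "w \<in> supp (gmult m f h)"
  then have "{(x, y). f x \<noteq> 0 \<and> h y \<noteq> 0 \<and> word_mult m x y = w} \<noteq> {}"
    unfolding supp_def gmult_def by (intro notI) simp
  then show "w \<in> (\<lambda>(x, y). word_mult m x y) ` (supp f \<times> supp h)"
    by (auto simp: supp_def)
qed

lemma sum_gmult:
  assumes "finite (supp f)" and "finite (supp h)"
  shows "(\<Sum>w\<in>(\<lambda>(x, y). word_mult m x y) ` (supp f \<times> supp h). gmult m f h w * \<Phi> w) =
    (\<Sum>(x, y)\<in>supp f \<times> supp h. f x * h y * \<Phi> (word_mult m x y))"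
proof -
  let ?S = "supp f \<times> supp h" and ?\<mu> = "\<lambda>(x, y). word_mult m x y"
  have "gmult m f h w = (\<Sum>p\<in>{p \<in> ?S. ?\<mu> p = w}. case p of (x, y) \<Rightarrow> f x * h y)" for w
    unfolding gmult_def supp_def by (rule sum.cong) auto
  then have "(\<Sum>w\<in>?\<mu> ` ?S. gmult m f h w * \<Phi> w) =
      (\<Sum>w\<in>?\<mu> ` ?S. \<Sum>p\<in>{p \<in> ?S. ?\<mu> p = w}. case p of (x, y) \<Rightarrow> f x * h y * \<Phi> (word_mult m x y))"
    by (auto simp: sum_distrib_right intro!: sum.cong)
  also have "\<dots> = (\<Sum>(x, y)\<in>?S. f x * h y * \<Phi> (word_mult m x y))"
    using assms by (intro sum.group) auto
  finally show ?thesis .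
qed

lemma cnj_gmult: "(\<lambda>w. cnj (gmult m f h w)) = gmult m (\<lambda>w. cnj (f w)) (\<lambda>w. cnj (h w))"
  unfolding gmult_def by (auto simp: fun_eq_iff cnj_sum case_prod_unfold)

lemma supp_cnj: "supp (\<lambda>w. cnj (f w)) = supp f"
  by (simp add: supp_def)

lemma supp_gstar:
  assumes "fin_over I m f"
  shows "supp (gstar m f) = word_inv m ` supp f"
proof -
  have over: "word_over I m x" if "x \<in> supp f" for x
    using assms that by (simp add: fin_over_def)
  have "supp (gstar m f) = {w. word_inv m w \<in> supp f}"
    by (simp add: supp_def gstar_def)
  also have "\<dots> = word_inv m ` supp f"
  proof (intro equalityI subsetI)
    fix w
    assume "w \<in> {w. word_inv m w \<in> supp f}"
    then have "word_inv m w \<in> supp f" by simp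
    moreover from over[OF this] have "w = word_inv m (word_inv m w)"
      by (simp add: word_inv_inv word_over_inv)
    ultimately show "w \<in> word_inv m ` supp f" by blast
  next
    fix w
    assume "w \<in> word_inv m ` supp f"
    then obtain x where "x \<in> supp f" and "w = word_inv m x" by blast
    then show "w \<in> {w. word_inv m w \<in> supp f}"
      using over[of x] by (simp add: word_inv_inv)
  qed
  finally show ?thesis .
qed

lemma inj_on_word_inv: "fin_over I m f \<Longrightarrow> inj_on (word_inv m) (supp f)"
  by (metis fin_over_def inj_on_inverseI word_inv_inv)

lemma fin_over_gmult:
  assumes "0 < m" and "fin_over I m f" and "fin_over I m h"
  shows "fin_over I m (gmult m f h)"
  using assms finite_subset[OF supp_gmult] supp_gmult[of m f h]
  by (fastforce simp: fin_over_def intro: word_over_mult)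

lemma fin_over_gadd:
  assumes "fin_over I m f" and "fin_over I m h"
  shows "fin_over I m (gadd f h)"
proof -
  have "supp (gadd f h) \<subseteq> supp f \<union> supp h"
    by (auto simp: supp_def gadd_def)
  then show ?thesis
    using assms by (auto simp: fin_over_def intro: finite_subset)
qed

lemma fin_over_gstar: "fin_over I m f \<Longrightarrow> fin_over I m (gstar m f)"
  unfolding fin_over_def[of I m "gstar m f"] by (auto simp: supp_gstar fin_over_def word_over_inv)

lemma fin_over_zero: "fin_over I m (\<lambda>w. 0)"
  by (simp add: fin_over_def supp_def)

locale cyclic_action =
  fixes I :: "'v set" and m :: nat and U :: "'v \<Rightarrow> nat \<Rightarrow> 'x vec \<Rightarrow> 'x vec"
  assumes m_pos: "0 < m"
    and lin_U: "v \<in> I \<Longrightarrow> lin (U v k)"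
    and U_0: "v \<in> I \<Longrightarrow> U v 0 f = f"
    and U_U: "v \<in> I \<Longrightarrow> U v k (U v j f) = U v (k + j) f"
    and U_mod: "v \<in> I \<Longrightarrow> U v (k mod m) = U v k"
begin

lemma U_cong_mod: "v \<in> I \<Longrightarrow> k mod m = j mod m \<Longrightarrow> U v k f = U v j f"
  by (metis U_mod)

lemma U_mod_eq_0: "v \<in> I \<Longrightarrow> k mod m = 0 \<Longrightarrow> U v k f = f"
  using U_cong_mod[of v k 0] by (simp add: U_0)

lemma U_m_minus_U_m_minus:
  assumes "v \<in> I" and "0 < j" and "j < m" and "0 < k" and "k < m"
  shows "U v (m - j) (U v (m - k) f) = (if (k + j) mod m = 0 then f else U v (m - (k + j) mod m) f)"
proof -
  have "(m - j + (m - k)) mod m = (if (k + j) mod m = 0 then 0 else (m - (k + j) mod m) mod m)"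
  proof -
    consider "k + j < m" | "k + j = m" | "m < k + j" "k + j < 2 * m"
      using assms by linarith
    then show ?thesis
    proof cases
      case 1
      then have "m - j + (m - k) = m + (m - (k + j))" by simp
      then show ?thesis using 1 assms by (simp only: mod_add_self1) simp
    next
      case 2
      then have "m - j + (m - k) = m" by simp
      then show ?thesis using 2 by simp
    next
      case 3
      then have "(k + j) mod m = k + j - m" and "m - j + (m - k) = m - (k + j - m)"
        and "m - (k + j - m) < m"
        using assms by (simp_all add: le_mod_geq)
      then show ?thesis by simp
    qed
  qed
  then show ?thesis
    unfolding U_U[OF assms(1)] by (auto intro: U_mod_eq_0[OF assms(1)] U_cong_mod[OF assms(1)])
qed

primrec word_op :: "'v word \<Rightarrow> 'x vec \<Rightarrow> 'x vec" where
  "word_op [] f = f"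
| "word_op (l # w) f = U (fst l) (snd l) (word_op w f)"

lemma lin_word_op: "word_over I m w \<Longrightarrow> lin (word_op w)"
proof (induction w)
  case Nil
  then show ?case by (simp add: lin_id)
next
  case (Cons l w)
  then show ?case
    by (cases l) (simp add: lin_comp[OF lin_U])
qed

lemma word_op_append: "word_op (xs @ ys) f = word_op xs (word_op ys f)"
  by (induction xs) simp_all

lemma word_op_ins_letter:
  assumes "v \<in> I"
  shows "word_op (ins_letter m (v, k) w) f = U v k (word_op w f)"
proof (cases w)
  case Nil
  then show ?thesis
    using assms by (simp add: U_mod U_mod_eq_0)
next
  case (Cons l w')
  obtain u j where l: "l = (u, j)" by (cases l)
  have "U v k (U v j g) = U v ((k + j) mod m) g" for g
    using assms by (simp add: U_U U_mod)
  moreover have "U v k g = (if k mod m = 0 then g else U v (k mod m) g)" for g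
    using assms by (simp add: U_mod U_mod_eq_0)
  ultimately show ?thesis
    using Cons l by (auto simp: U_mod_eq_0[OF assms])
qed

lemma word_op_mult: "word_over I m x \<Longrightarrow> word_op (word_mult m x y) f = word_op x (word_op y f)"
proof (induction x arbitrary: f)
  case Nil
  then show ?case by (simp add: word_mult_def)
next
  case (Cons l x)
  then show ?case
    by (cases l) (simp add: word_mult_def word_op_ins_letter)
qed

lemma word_op_inv_ins_letter:
  assumes "v \<in> I" and "0 < k" and "k < m" and "word_over I m w"
  shows "word_op (word_inv m (ins_letter m (v, k) w)) f = word_op (word_inv m w) (U v (m - k) f)"
proof (cases w)
  case Nil
  then show ?thesis
    using assms by (simp add: word_inv_def)
next
  case (Cons l w')
  obtain u j where l: "l = (u, j)" by (cases l)
  have j: "0 < j" "j < m" "u \<in> I"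
    using assms(4) Cons l by auto
  show ?thesis
  proof (cases "u = v")
    case True
    then show ?thesis
      using Cons l U_m_minus_U_m_minus[OF assms(1) j(1,2) assms(2,3), of f]
      by (auto simp: word_inv_Cons word_op_append)
  next
    case False
    then show ?thesis
      using Cons l assms(2,3) by (simp add: word_inv_Cons word_op_append)
  qed
qed

lemma word_op_inv_mult:
  assumes "word_over I m x" and "word_over I m y"
  shows "word_op (word_inv m (word_mult m x y)) f = word_op (word_inv m y) (word_op (word_inv m x) f)"
  using assms(1)
proof (induction x arbitrary: f)
  case Nil
  then show ?case by (simp add: word_mult_def)
next
  case (Cons l x)
  obtain v k where l: "l = (v, k)" by (cases l)
  have "word_mult m (l # x) y = ins_letter m (v, k) (word_mult m x y)"
    by (simp add: word_mult_def l)
  then have "word_op (word_inv m (word_mult m (l # x) y)) f =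
      word_op (word_inv m (word_mult m x y)) (U v (m - k) f)"
    using Cons.prems l assms(2) m_pos by (simp add: word_op_inv_ins_letter word_over_mult)
  then show ?case
    using Cons l by (simp add: word_inv_Cons word_op_append)
qed

definition rep :: "('v word \<Rightarrow> complex) \<Rightarrow> 'x vec \<Rightarrow> 'x vec" where
  "rep f g = (\<lambda>u. \<Sum>w\<in>supp f. f w * word_op w g u)"

definition rep_star :: "('v word \<Rightarrow> complex) \<Rightarrow> 'x vec \<Rightarrow> 'x vec" where
  "rep_star f g = (\<lambda>u. \<Sum>w\<in>supp f. cnj (f w) * word_op (word_inv m w) g u)"

lemma rep_eq_sum: "finite W \<Longrightarrow> supp f \<subseteq> W \<Longrightarrow> rep f g u = (\<Sum>w\<in>W. f w * word_op w g u)"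
  unfolding rep_def by (intro sum.mono_neutral_left) (auto simp: supp_def)

lemma rep_star_eq_sum:
  "finite W \<Longrightarrow> supp f \<subseteq> W \<Longrightarrow> rep_star f g u = (\<Sum>w\<in>W. cnj (f w) * word_op (word_inv m w) g u)"
  unfolding rep_star_def by (intro sum.mono_neutral_left) (auto simp: supp_def)

lemma rep_gmult:
  assumes f: "fin_over I m f" and h: "fin_over I m h"
  shows "rep (gmult m f h) g = rep f (rep h g)"
proof
  fix u
  have fin: "finite (supp f)" "finite (supp h)"
    using f h by (simp_all add: fin_over_def)
  have "rep (gmult m f h) g u =
      (\<Sum>w\<in>(\<lambda>(x, y). word_mult m x y) ` (supp f \<times> supp h). gmult m f h w * word_op w g u)"
    using fin by (intro rep_eq_sum supp_gmult) simp
  also have "\<dots> = (\<Sum>(x, y)\<in>supp f \<times> supp h. f x * h y * word_op (word_mult m x y) g u)"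
    using fin by (rule sum_gmult)
  also have "\<dots> = (\<Sum>x\<in>supp f. \<Sum>y\<in>supp h. f x * h y * word_op x (word_op y g) u)"
    using f by (auto simp: sum.cartesian_product fin_over_def word_op_mult intro!: sum.cong)
  also have "\<dots> = rep f (rep h g) u"
    using f fin unfolding rep_def
    by (auto simp: fin_over_def lin_sum[OF lin_word_op] lin_scale[OF lin_word_op]
        sum_distrib_left mult.assoc intro!: sum.cong)
  finally show "rep (gmult m f h) g u = rep f (rep h g) u" .
qed

lemma rep_star_gmult:
  assumes f: "fin_over I m f" and h: "fin_over I m h"
  shows "rep_star (gmult m f h) g = rep_star h (rep_star f g)"
proof
  fix u
  have fin: "finite (supp f)" "finite (supp h)"
    using f h by (simp_all add: fin_over_def)
  have "rep_star (gmult m f h) g u = (\<Sum>w\<in>(\<lambda>(x, y). word_mult m x y) ` (supp f \<times> supp h).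
      gmult m (\<lambda>w. cnj (f w)) (\<lambda>w. cnj (h w)) w * word_op (word_inv m w) g u)"
    using fin by (simp add: rep_star_eq_sum supp_gmult cnj_gmult[symmetric])
  also have "\<dots> = (\<Sum>(x, y)\<in>supp f \<times> supp h.
      cnj (f x) * cnj (h y) * word_op (word_inv m (word_mult m x y)) g u)"
    using sum_gmult[of "\<lambda>w. cnj (f w)" "\<lambda>w. cnj (h w)"] fin by (simp add: supp_cnj)
  also have "\<dots> = (\<Sum>x\<in>supp f. \<Sum>y\<in>supp h.
      cnj (h y) * cnj (f x) * word_op (word_inv m y) (word_op (word_inv m x) g) u)"
    using f h by (auto simp: sum.cartesian_product fin_over_def word_op_inv_mult
        mult.commute intro!: sum.cong)
  also have "\<dots> = (\<Sum>y\<in>supp h. \<Sum>x\<in>supp f.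
      cnj (h y) * cnj (f x) * word_op (word_inv m y) (word_op (word_inv m x) g) u)"
    by (rule sum.swap)
  also have "\<dots> = rep_star h (rep_star f g) u"
    using h fin unfolding rep_star_def
    by (auto simp: fin_over_def word_over_inv lin_sum[OF lin_word_op] lin_scale[OF lin_word_op]
        sum_distrib_left mult.assoc intro!: sum.cong)
  finally show "rep_star (gmult m f h) g u = rep_star h (rep_star f g) u" .
qed

lemma rep_gstar:
  assumes "fin_over I m f"
  shows "rep (gstar m f) g = rep_star f g"
proof
  fix u
  have "rep (gstar m f) g u = (\<Sum>x\<in>supp f. gstar m f (word_inv m x) * word_op (word_inv m x) g u)"
    unfolding rep_def supp_gstar[OF assms] by (rule sum.reindex[OF inj_on_word_inv[OF assms], unfolded comp_def])
  also have "\<dots> = rep_star f g u"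
    using assms unfolding rep_star_def
    by (intro sum.cong) (auto simp: fin_over_def gstar_def word_inv_inv)
  finally show "rep (gstar m f) g u = rep_star f g u" .
qed

lemma rep_star_gstar:
  assumes "fin_over I m f"
  shows "rep_star (gstar m f) g = rep f g"
proof
  fix u
  have "rep_star (gstar m f) g u =
      (\<Sum>x\<in>supp f. cnj (gstar m f (word_inv m x)) * word_op (word_inv m (word_inv m x)) g u)"
    unfolding rep_star_def supp_gstar[OF assms]
    by (rule sum.reindex[OF inj_on_word_inv[OF assms], unfolded comp_def])
  also have "\<dots> = rep f g u"
    using assms unfolding rep_def
    by (intro sum.cong) (auto simp: fin_over_def gstar_def word_inv_inv)
  finally show "rep_star (gstar m f) g u = rep f g u" .
qed

lemma rep_gadd:
  assumes "fin_over I m f" and "fin_over I m h"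
  shows "rep (gadd f h) g u = rep f g u + rep h g u"
proof -
  have fin: "finite (supp f \<union> supp h)" and sub: "supp (gadd f h) \<subseteq> supp f \<union> supp h"
    using assms by (auto simp: fin_over_def supp_def gadd_def)
  show ?thesis
    using rep_eq_sum[OF fin sub] rep_eq_sum[OF fin, of f] rep_eq_sum[OF fin, of h]
    by (simp add: gadd_def distrib_right sum.distrib)
qed

lemma rep_star_gadd:
  assumes "fin_over I m f" and "fin_over I m h"
  shows "rep_star (gadd f h) g u = rep_star f g u + rep_star h g u"
proof -
  have fin: "finite (supp f \<union> supp h)" and sub: "supp (gadd f h) \<subseteq> supp f \<union> supp h"
    using assms by (auto simp: fin_over_def supp_def gadd_def)
  show ?thesis
    using rep_star_eq_sum[OF fin sub] rep_star_eq_sum[OF fin, of f] rep_star_eq_sum[OF fin, of h]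
    by (simp add: gadd_def distrib_right sum.distrib)
qed

lemma rep_zero_vec: "fin_over I m f \<Longrightarrow> rep f (\<lambda>u. 0) = (\<lambda>u. 0)"
  unfolding rep_def by (auto simp: fin_over_def lin_zero[OF lin_word_op] intro!: sum.neutral)

lemma rep_star_zero_vec: "fin_over I m f \<Longrightarrow> rep_star f (\<lambda>u. 0) = (\<lambda>u. 0)"
  unfolding rep_star_def
  by (auto simp: fin_over_def word_over_inv lin_zero[OF lin_word_op] intro!: sum.neutral)

lemma rep_gone: "rep gone g = g"
  by (simp add: rep_def gone_def gelem_def supp_def)

lemma rep_star_gone: "rep_star gone g = g"
  by (simp add: rep_star_def gone_def gelem_def supp_def)

definition rep_null :: "('v word \<Rightarrow> complex) \<Rightarrow> bool" where
  "rep_null x \<longleftrightarrow> fin_over I m x \<and> (\<forall>g. rep x g = (\<lambda>u. 0) \<and> rep_star x g = (\<lambda>u. 0))"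

lemma rep_null_star_ideal:
  assumes "\<And>s. s \<in> S \<Longrightarrow> rep_null s" and "x \<in> star_ideal I m S"
  shows "rep_null x"
  using assms(2)
proof (induction rule: star_ideal.induct)
  case (gen s)
  then show ?case by (rule assms(1))
next
  case zero
  then show ?case
    by (simp add: rep_null_def fin_over_zero rep_def rep_star_def supp_def)
next
  case (add x y)
  then show ?case
    by (simp add: rep_null_def fin_over_gadd rep_gadd rep_star_gadd fun_eq_iff)
next
  case (lmult a x)
  then have "fin_over I m a"
    by (simp add: galg_fin_over)
  with lmult.IH show ?case
    by (simp add: rep_null_def fin_over_gmult m_pos rep_gmult rep_star_gmult
        rep_zero_vec rep_star_zero_vec)
next
  case (rmult a x)
  then have "fin_over I m a"
    by (simp add: galg_fin_over)
  with rmult.IH show ?case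
    by (simp add: rep_null_def fin_over_gmult m_pos rep_gmult rep_star_gmult
        rep_zero_vec rep_star_zero_vec)
next
  case (star x)
  then show ?case
    by (simp add: rep_null_def fin_over_gstar rep_gstar rep_star_gstar)
qed

lemma gone_notin_star_ideal:
  assumes "\<And>s. s \<in> S \<Longrightarrow> rep_null s"
  shows "gone \<notin> star_ideal I m S"
proof
  assume "gone \<in> star_ideal I m S"
  then have "rep gone (\<lambda>u. 1) = (\<lambda>u. 0)"
    using rep_null_star_ideal[OF assms] by (simp add: rep_null_def)
  then show False
    by (simp add: rep_gone fun_eq_iff)
qed

lemma fin_over_letter: "v \<in> I \<Longrightarrow> 1 < m \<Longrightarrow> fin_over I m (gscale c (gelem [(v, 1)]))"
  by (auto simp: fin_over_def supp_def gscale_def gelem_def)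

lemma fin_over_gone: "fin_over I m gone"
  by (auto simp: fin_over_def supp_def gone_def gelem_def)

lemma rep_gpow_letter:
  assumes "v \<in> I" and "1 < m"
  shows "fin_over I m (gpow m (gscale c (gelem [(v, 1)])) k) \<and>
    rep (gpow m (gscale c (gelem [(v, 1)])) k) g = (\<lambda>u. c ^ k * U v k g u) \<and>
    rep_star (gpow m (gscale c (gelem [(v, 1)])) k) g = (\<lambda>u. cnj c ^ k * U v ((m - 1) * k) g u)"
proof (induction k arbitrary: g)
  case 0
  show ?case
    using assms(1) by (simp add: fin_over_gone rep_gone rep_star_gone U_0)
next
  case (Suc k)
  let ?e = "gscale c (gelem [(v, 1)])"
  have e: "fin_over I m ?e"
    by (rule fin_over_letter[OF assms])
  have "rep ?e g = (\<lambda>u. c * U v 1 g u)" and "rep_star ?e g = (\<lambda>u. cnj c * U v (m - 1) g u)" for g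
    by (cases "c = 0"; auto simp: rep_def rep_star_def supp_def gscale_def gelem_def word_inv_def)+
  then show ?case
    using Suc.IH e m_pos
    by (simp add: fin_over_gmult rep_gmult rep_star_gmult lin_scale[OF lin_U[OF assms(1)]]
        U_U[OF assms(1)] algebra_simps)
qed

lemma fin_over_lincomb:
  assumes "finite K" and "\<And>k. k \<in> K \<Longrightarrow> fin_over I m (G k)"
  shows "fin_over I m (\<lambda>w. r * (\<Sum>k\<in>K. G k w))"
proof -
  have "supp (\<lambda>w. r * (\<Sum>k\<in>K. G k w)) \<subseteq> (\<Union>k\<in>K. supp (G k))"
    by (auto simp: supp_def intro: ccontr)
  then show ?thesis
    using assms by (auto simp: fin_over_def intro: finite_subset)
qed

lemma rep_lincomb:
  assumes "finite K" and "\<And>k. k \<in> K \<Longrightarrow> fin_over I m (G k)"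
  shows "rep (\<lambda>w. r * (\<Sum>k\<in>K. G k w)) g u = r * (\<Sum>k\<in>K. rep (G k) g u)"
    and "rep_star (\<lambda>w. r * (\<Sum>k\<in>K. G k w)) g u = cnj r * (\<Sum>k\<in>K. rep_star (G k) g u)"
proof -
  define W where "W = (\<Union>k\<in>K. supp (G k))"
  have W: "finite W" "supp (\<lambda>w. r * (\<Sum>k\<in>K. G k w)) \<subseteq> W" "\<And>k. k \<in> K \<Longrightarrow> supp (G k) \<subseteq> W"
    using assms by (auto simp: W_def fin_over_def supp_def intro: ccontr)
  show "rep (\<lambda>w. r * (\<Sum>k\<in>K. G k w)) g u = r * (\<Sum>k\<in>K. rep (G k) g u)"
    using W by (simp add: rep_eq_sum sum_distrib_left sum_distrib_right mult.assoc
        sum.swap[of _ W] cong: sum.cong)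
  show "rep_star (\<lambda>w. r * (\<Sum>k\<in>K. G k w)) g u = cnj r * (\<Sum>k\<in>K. rep_star (G k) g u)"
    using W by (simp add: rep_star_eq_sum cnj_sum sum_distrib_left sum_distrib_right mult.assoc
        sum.swap[of _ W] cong: sum.cong)
qed

end

section \<open>Four orthogonal projections give an action of Z/4\<close>

lemma omega_4: "omega 4 = \<i>"
proof -
  have "2 * complex_of_real pi * \<i> / of_nat 4 = \<i> * complex_of_real (pi / 2)"
    by (simp add: field_simps)
  then have "omega 4 = cis (pi / 2)"
    by (simp add: omega_def cis_conv_exp)
  then show ?thesis by simp
qed

lemma i_pow_mod_4: "\<i> ^ (k mod 4) = \<i> ^ k"
proof -
  have "\<i> ^ k = \<i> ^ (4 * (k div 4) + k mod 4)"
    by simp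
  also have "\<dots> = (\<i> ^ 4) ^ (k div 4) * \<i> ^ (k mod 4)"
    by (simp only: power_add power_mult)
  finally show ?thesis by simp
qed

lemma lessThan_4: "{..<4::nat} = {0, 1, 2, 3}"
  by auto

lemma sum_lessThan_4: "(\<Sum>k<4. f k) = f 0 + f 1 + f 2 + f (3::nat)"
  by (simp add: lessThan_4 add.assoc)

lemma character_orthogonality_4:
  assumes "a < 4" and "b < 4"
  shows "(\<Sum>k<4. (inverse \<i> ^ a) ^ k * \<i> ^ (b * k)) = (if a = b then 4 else 0)"
    and "(\<Sum>k<4. cnj (inverse \<i> ^ a) ^ k * \<i> ^ (b * (3 * k))) = (if a = b then 4 else 0)"
proof -
  have "a = 0 \<or> a = 1 \<or> a = 2 \<or> a = 3" and "b = 0 \<or> b = 1 \<or> b = 2 \<or> b = 3"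
    using assms by auto
  then show "(\<Sum>k<4. (inverse \<i> ^ a) ^ k * \<i> ^ (b * k)) = (if a = b then 4 else 0)"
    and "(\<Sum>k<4. cnj (inverse \<i> ^ a) ^ k * \<i> ^ (b * (3 * k))) = (if a = b then 4 else 0)"
    unfolding sum_lessThan_4 by (auto simp: power_mult_distrib numeral_eq_Suc)
qed

locale four_projections =
  fixes I :: "'v set" and P :: "'v \<Rightarrow> nat \<Rightarrow> 'x vec \<Rightarrow> 'x vec"
  assumes lin_P: "v \<in> I \<Longrightarrow> lin (P v a)"
    and P_sum: "v \<in> I \<Longrightarrow> (\<Sum>a<4. P v a g u) = g u"
    and P_orth: "v \<in> I \<Longrightarrow> a < 4 \<Longrightarrow> b < 4 \<Longrightarrow> a \<noteq> b \<Longrightarrow> P v a (P v b g) = (\<lambda>u. 0)"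
begin

lemma P_lincomb:
  assumes "v \<in> I" and "a < 4"
  shows "P v a (\<lambda>u. \<Sum>b<4. c b * P v b g u) = (\<lambda>u. c a * P v a g u)"
proof -
  have "P v a (\<lambda>u. \<Sum>b<4. c b * P v b g u) u = (\<Sum>b<4. c b * P v a (P v b g) u)" for c u
    by (simp add: lin_sum[OF lin_P[OF assms(1)]] lin_scale[OF lin_P[OF assms(1)]])
  also have "\<dots> c u = c a * P v a (P v a g) u" for c u
    using assms P_orth by (simp add: sum.remove[of _ a] sum.neutral)
  finally have comb: "P v a (\<lambda>u. \<Sum>b<4. c b * P v b g u) u = c a * P v a (P v a g) u" for c u .
  from comb[of "\<lambda>b. 1"] have "P v a (P v a g) = P v a g"
    using P_sum[OF assms(1)] by (simp add: fun_eq_iff)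
  with comb show ?thesis by (simp add: fun_eq_iff)
qed

definition rot :: "'v \<Rightarrow> nat \<Rightarrow> 'x vec \<Rightarrow> 'x vec" where
  "rot v k g = (\<lambda>u. \<Sum>a<4. \<i> ^ (a * k) * P v a g u)"

sublocale cyclic_action I 4 rot
proof
  fix v k j f
  assume v: "v \<in> I"
  show "lin (rot v k)"
    unfolding rot_def by (intro lin_sum_ops lin_scale_ops lin_P v) simp
  show "rot v 0 f = f"
    by (simp add: rot_def P_sum[OF v])
  have "a < 4 \<Longrightarrow> P v a (rot v j f) = (\<lambda>u. \<i> ^ (a * j) * P v a f u)" for a
    unfolding rot_def by (rule P_lincomb[OF v])
  then show "rot v k (rot v j f) = rot v (k + j) f"
    unfolding rot_def[of v k] rot_def[of v "k + j"] by (simp add: power_add algebra_simps)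
  have "\<i> ^ (a * (k mod 4)) = \<i> ^ (a * k)" for a
    by (metis i_pow_mod_4 mod_mult_right_eq)
  then show "rot v (k mod 4) = rot v k"
    unfolding rot_def by simp
qed simp

lemma eproj_eq: "eproj 4 v a = (\<lambda>w. 1 / 4 * (\<Sum>k<4. gpow 4 (gscale (inverse \<i> ^ a) (gelem [(v, 1)])) k w))"
  by (simp add: eproj_def omega_4 ugen_def)

lemma rot_fourier_inversion:
  assumes "v \<in> I" and "a < 4"
    and orth: "\<And>b. b < 4 \<Longrightarrow> (\<Sum>k<4. d k * \<i> ^ (b * t k)) = (if a = b then 4 else 0)"
  shows "1 / 4 * (\<Sum>k<4. d k * rot v (t k) g u) = P v a g u"
proof -
  have "(\<Sum>k<4. d k * rot v (t k) g u) = (\<Sum>b<4. (\<Sum>k<4. d k * \<i> ^ (b * t k)) * P v b g u)"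
    unfolding rot_def sum_distrib_left sum_distrib_right mult.assoc by (rule sum.swap)
  also have "\<dots> = (\<Sum>b<4. if a = b then 4 * P v b g u else 0)"
    using orth by (intro sum.cong) auto
  finally show ?thesis
    using assms(2) by simp
qed

lemma rep_eproj:
  assumes "v \<in> I" and "a < 4"
  shows "fin_over I 4 (eproj 4 v a)" and "rep (eproj 4 v a) g = P v a g"
    and "rep_star (eproj 4 v a) g = P v a g"
proof -
  let ?e = "\<lambda>k. gpow 4 (gscale (inverse \<i> ^ a) (gelem [(v, 1)])) k"
  note gpow = rep_gpow_letter[OF assms(1), of "inverse \<i> ^ a", simplified]
  show "fin_over I 4 (eproj 4 v a)"
    unfolding eproj_eq using gpow by (intro fin_over_lincomb) auto
  show "rep (eproj 4 v a) g = P v a g"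
  proof
    fix u
    have "rep (eproj 4 v a) g u = 1 / 4 * (\<Sum>k<4. rep (?e k) g u)"
      unfolding eproj_eq using gpow by (intro rep_lincomb) auto
    also have "\<dots> = 1 / 4 * (\<Sum>k<4. (inverse \<i> ^ a) ^ k * rot v k g u)"
      using gpow by simp
    also have "\<dots> = P v a g u"
      using character_orthogonality_4(1)[OF assms(2)] by (rule rot_fourier_inversion[OF assms])
    finally show "rep (eproj 4 v a) g u = P v a g u" .
  qed
  show "rep_star (eproj 4 v a) g = P v a g"
  proof
    fix u
    have "rep_star (eproj 4 v a) g u = cnj (1 / 4) * (\<Sum>k<4. rep_star (?e k) g u)"
      unfolding eproj_eq using gpow by (intro rep_lincomb) auto
    also have "\<dots> = 1 / 4 * (\<Sum>k<4. cnj (inverse \<i> ^ a) ^ k * rot v (3 * k) g u)"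
      using gpow by simp
    also have "\<dots> = P v a g u"
      using character_orthogonality_4(2)[OF assms(2)] by (rule rot_fourier_inversion[OF assms])
    finally show "rep_star (eproj 4 v a) g u = P v a g u" .
  qed
qed

lemma gone_notin_hom_ideal:
  assumes loopless: "\<And>v. (v, v) \<notin> E"
    and colouring: "\<And>v w a g. v \<in> I \<Longrightarrow> w \<in> I \<Longrightarrow> v \<noteq> w \<Longrightarrow> a < 4 \<Longrightarrow> P v a (P w a g) = (\<lambda>u. 0)"
  shows "gone \<notin> hom_ideal I E 4 (K_edges 4)"
  unfolding hom_ideal_def
proof (rule gone_notin_star_ideal)
  fix s
  assume "s \<in> {gmult 4 (eproj 4 v a) (eproj 4 w b) | v w a b.
    v \<in> I \<and> w \<in> I \<and> a < 4 \<and> b < 4 \<and> \<not> hom_rule E (K_edges 4) v w a b}"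
  then obtain v w a b where s: "s = gmult 4 (eproj 4 v a) (eproj 4 w b)"
    and vw: "v \<in> I" "w \<in> I" "a < 4" "b < 4" and violated: "\<not> hom_rule E (K_edges 4) v w a b"
    by blast
  have "(v = w \<and> a \<noteq> b) \<or> (v \<noteq> w \<and> a = b)"
    using violated loopless vw by (auto simp: hom_rule_def K_edges_def)
  then have "P v a (P w b g) = (\<lambda>u. 0)" and "P w b (P v a g) = (\<lambda>u. 0)" for g
    using vw P_orth colouring by auto
  then show "rep_null s"
    unfolding rep_null_def s using vw
    by (simp add: fin_over_gmult rep_gmult rep_star_gmult rep_eproj)
qed

end

section \<open>An algebraic four-colouring of the complete graph\<close>

definition create :: "'v \<Rightarrow> 'v list vec \<Rightarrow> 'v list vec" where
  "create v g = (\<lambda>u. case u of [] \<Rightarrow> 0 | x # u' \<Rightarrow> if x = v then g u' else 0)"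

lemma create_Nil [simp]: "create v g [] = 0"
  and create_Cons [simp]: "create v g (x # u) = (if x = v then g u else 0)"
  by (simp_all add: create_def)

lemma lin_create: "lin (create v)"
  unfolding lin_def by (auto simp: fun_eq_iff create_def split: list.split)

lemma create_zero: "create v (\<lambda>u. 0) = (\<lambda>u. 0)"
  by (auto simp: fun_eq_iff create_def split: list.split)

text \<open>The recursion defining A_op decreases the word length but is not structural;
  A_lev n performs it on words of length n.\<close>
primrec A_lev :: "'v set \<Rightarrow> nat \<Rightarrow> 'v \<Rightarrow> 'v list vec \<Rightarrow> 'v list vec" where
  "A_lev V 0 v f = f"
| "A_lev V (Suc n) v f = (\<lambda>u. f u - create v (A_lev V n v
     (\<lambda>u. 2 * f (v # u) - (\<Sum>w\<in>V. A_lev V n w (\<lambda>u. f (w # u)) u))) u)"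

definition A_op :: "'v set \<Rightarrow> 'v \<Rightarrow> 'v list vec \<Rightarrow> 'v list vec" where
  "A_op V v f = (\<lambda>u. A_lev V (length u) v f u)"

definition alpha_op :: "'v set \<Rightarrow> 'v \<Rightarrow> 'v list vec \<Rightarrow> 'v list vec" where
  "alpha_op V v f = A_op V v (\<lambda>u. 2 * f (v # u) - (\<Sum>w\<in>V. A_op V w (\<lambda>u. f (w # u)) u))"

lemma lin_A_lev: "finite V \<Longrightarrow> lin (A_lev V n v)"
proof (induction n arbitrary: v)
  case 0
  then show ?case by (simp add: lin_id)
next
  case (Suc n)
  have inner: "lin (\<lambda>f u. 2 * f (v # u) - (\<Sum>w\<in>V. A_lev V n w (\<lambda>u. f (w # u)) u))"
    by (intro lin_diff_ops lin_scale_ops lin_eval_shift lin_sum_ops[OF Suc.prems]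
        lin_comp[OF Suc.IH[OF Suc.prems] lin_eval_shift])
  have "lin (\<lambda>f u. f u - create v (A_lev V n v
          ((\<lambda>f u. 2 * f (v # u) - (\<Sum>w\<in>V. A_lev V n w (\<lambda>u. f (w # u)) u)) f)) u)"
    by (intro lin_diff_ops lin_id lin_comp[OF lin_create] lin_comp[OF Suc.IH[OF Suc.prems] inner])
  then show ?case by simp
qed

lemma A_lev_cong:
  "(\<And>u'. length u' = n \<Longrightarrow> f u' = g u') \<Longrightarrow> length u = n \<Longrightarrow> A_lev V n v f u = A_lev V n v g u"
proof (induction n arbitrary: f g u v)
  case 0
  then show ?case by simp
next
  case (Suc n)
  then obtain x u' where u: "u = x # u'" and len: "length u' = n"
    by (cases u) auto
  have "A_lev V n w (\<lambda>u. f (w # u)) u'' = A_lev V n w (\<lambda>u. g (w # u)) u''"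
    if "length u'' = n" for w u''
    using Suc.IH[of "\<lambda>u. f (w # u)" "\<lambda>u. g (w # u)"] Suc.prems(1) that by simp
  then have "A_lev V n v (\<lambda>u. 2 * f (v # u) - (\<Sum>w\<in>V. A_lev V n w (\<lambda>u. f (w # u)) u)) u' =
             A_lev V n v (\<lambda>u. 2 * g (v # u) - (\<Sum>w\<in>V. A_lev V n w (\<lambda>u. g (w # u)) u)) u'"
    using Suc.prems(1) len by (intro Suc.IH) simp_all
  then show ?case using Suc.prems u by simp
qed

lemma A_op_cong: "(\<And>u'. length u' = length u \<Longrightarrow> f u' = g u') \<Longrightarrow> A_op V v f u = A_op V v g u"
  unfolding A_op_def by (rule A_lev_cong) auto

lemma alpha_op_cong:
  assumes "\<And>u'. length u' = Suc (length u) \<Longrightarrow> f u' = g u'"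
  shows "alpha_op V v f u = alpha_op V v g u"
  unfolding alpha_op_def using assms by (intro A_op_cong arg_cong2[where f = "(-)"] sum.cong) simp_all

lemma lin_A_op: "finite V \<Longrightarrow> lin (A_op V v)"
  using lin_A_lev[of V _ v] unfolding lin_def A_op_def by (simp add: fun_eq_iff)

lemma lin_alpha_op: "finite V \<Longrightarrow> lin (alpha_op V v)"
  unfolding alpha_op_def
  by (intro lin_comp[OF lin_A_op] lin_diff_ops lin_scale_ops lin_eval_shift lin_sum_ops
      lin_comp[OF lin_A_op lin_eval_shift])

lemma A_op_Nil: "A_op V v f [] = f []"
  by (simp add: A_op_def)

lemma A_op_Cons: "A_op V v f (x # u) = f (x # u) - (if x = v then alpha_op V v f u else 0)"
proof -
  have "A_lev V (length u) v (\<lambda>u'. 2 * f (v # u') -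
          (\<Sum>w\<in>V. A_lev V (length u) w (\<lambda>u. f (w # u)) u')) u = alpha_op V v f u"
    unfolding alpha_op_def A_op_def by (intro A_lev_cong) auto
  then show ?thesis by (simp add: A_op_def)
qed

lemma A_op_eq: "A_op V v f u = f u - create v (alpha_op V v f) u"
  by (cases u) (simp_all add: A_op_Nil A_op_Cons)

lemma A_op_eq_fun: "A_op V v f = (\<lambda>u. f u - create v (alpha_op V v f) u)"
  by (simp add: fun_eq_iff A_op_eq)

lemma alpha_op_create:
  assumes "finite V" and "w \<in> V"
  shows "alpha_op V v (create w t) u = (if v = w then 2 * A_op V v t u else 0) - A_op V v (A_op V w t) u"
proof -
  note linA = lin_A_op[OF assms(1)]
  have "(\<Sum>x\<in>V. A_op V x (\<lambda>u. create w t (x # u)) u) = (\<Sum>x\<in>V. if x = w then A_op V w t u else 0)"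
    for u
    using lin_zero[OF linA] by (intro sum.cong) (auto simp: eq_commute[of _ w])
  then have "alpha_op V v (create w t) u =
      A_op V v (\<lambda>u. (if v = w then 2 * t u else 0) - A_op V w t u) u"
    using assms unfolding alpha_op_def by (cases "v = w") simp_all
  also have "\<dots> = A_op V v (\<lambda>u. (if v = w then 2 * t u else 0)) u - A_op V v (A_op V w t) u"
    by (rule lin_diff[OF linA])
  also have "A_op V v (\<lambda>u. (if v = w then 2 * t u else 0)) u = (if v = w then 2 * A_op V v t u else 0)"
    using lin_scale[OF linA, where c = 2 and f = t] lin_zero[OF linA] by simp
  finally show ?thesis .
qed

lemma alpha_op_A_op_eq:
  assumes "finite V"
  shows "alpha_op V v (A_op V v f) u = alpha_op V v f u - alpha_op V v (create v (alpha_op V v f)) u"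
  unfolding A_op_eq_fun[of V v f] by (rule lin_diff[OF lin_alpha_op[OF assms]])

lemma A_op_idem_on_length:
  assumes "finite V" and "v \<in> V"
  shows "length u = n \<Longrightarrow> A_op V v (A_op V v f) u = A_op V v f u"
proof (induction n arbitrary: f u)
  case 0
  then show ?case by (simp add: A_op_Nil)
next
  case (Suc n)
  have A_alpha: "A_op V v (alpha_op V v f) u' = alpha_op V v f u'" if "length u' = n" for f u'
    using Suc.IH that unfolding alpha_op_def by blast
  have "alpha_op V v (A_op V v f) u' = 0" if len: "length u' = n" for u'
    using Suc.IH[OF len] A_alpha[OF len]
    by (simp add: alpha_op_A_op_eq[OF assms(1)] alpha_op_create[OF assms])
  then show ?case
    using Suc.prems by (cases u) (simp_all add: A_op_Cons)
qed

lemma A_op_idem: "finite V \<Longrightarrow> v \<in> V \<Longrightarrow> A_op V v (A_op V v f) = A_op V v f"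
  by (rule ext) (rule A_op_idem_on_length, simp_all)

lemma A_op_alpha_op: "finite V \<Longrightarrow> v \<in> V \<Longrightarrow> A_op V v (alpha_op V v f) = alpha_op V v f"
  unfolding alpha_op_def by (rule A_op_idem)

lemma alpha_op_A_op:
  assumes "finite V" and "v \<in> V"
  shows "alpha_op V v (A_op V v f) u = 0"
  unfolding alpha_op_A_op_eq[OF assms(1)] alpha_op_create[OF assms]
  by (simp add: A_op_idem[OF assms] A_op_alpha_op[OF assms])

lemma alpha_op_alpha_op:
  assumes "finite V" and "v \<in> V"
  shows "alpha_op V v (alpha_op V v f) u = 0"
  using alpha_op_A_op[OF assms, of "alpha_op V v f"] by (simp only: A_op_alpha_op[OF assms])

definition parity_part :: "bool \<Rightarrow> 'v list vec \<Rightarrow> 'v list vec" where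
  "parity_part p f = (\<lambda>u. if even (length u) = p then f u else 0)"

lemma create_parity_part: "create v (parity_part p f) = parity_part (\<not> p) (create v f)"
  by (auto simp: fun_eq_iff parity_part_def create_def split: list.split)

lemma A_op_parity_part:
  assumes "finite V"
  shows "A_op V v (parity_part p f) = parity_part p (A_op V v f)"
proof
  fix u :: "'a list"
  have "A_op V v (parity_part p f) u = A_op V v (if even (length u) = p then f else (\<lambda>u. 0)) u"
    by (rule A_op_cong) (simp add: parity_part_def)
  then show "A_op V v (parity_part p f) u = parity_part p (A_op V v f) u"
    using lin_zero[OF lin_A_op[OF assms]] by (simp add: parity_part_def)
qed

lemma alpha_op_parity_part:
  assumes "finite V"
  shows "alpha_op V v (parity_part p f) = parity_part (\<not> p) (alpha_op V v f)"
proof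
  fix u :: "'a list"
  have "alpha_op V v (parity_part p f) u = alpha_op V v (if even (length u) = (\<not> p) then f else (\<lambda>u. 0)) u"
    by (rule alpha_op_cong) (auto simp: parity_part_def)
  then show "alpha_op V v (parity_part p f) u = parity_part (\<not> p) (alpha_op V v f) u"
    using lin_zero[OF lin_alpha_op[OF assms]] by (simp add: parity_part_def)
qed

definition eigen_part :: "'v set \<Rightarrow> 'v \<Rightarrow> bool \<Rightarrow> complex \<Rightarrow> 'v list vec \<Rightarrow> 'v list vec" where
  "eigen_part V v p s g = parity_part p (\<lambda>u. (A_op V v g u + s * alpha_op V v g u) / 2)"

definition eigen_proj :: "'v set \<Rightarrow> 'v \<Rightarrow> bool \<Rightarrow> complex \<Rightarrow> 'v list vec \<Rightarrow> 'v list vec" where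
  "eigen_proj V v p s g = (\<lambda>u. eigen_part V v p s g u + s * create v (eigen_part V v p s g) u)"

lemma lin_eigen_part: "finite V \<Longrightarrow> lin (eigen_part V v p s)"
  unfolding lin_def eigen_part_def parity_part_def
  by (simp add: fun_eq_iff lin_add[OF lin_A_op] lin_scale[OF lin_A_op]
      lin_add[OF lin_alpha_op] lin_scale[OF lin_alpha_op] algebra_simps add_divide_distrib)

lemma lin_eigen_proj: "finite V \<Longrightarrow> lin (eigen_proj V v p s)"
  unfolding eigen_proj_def
  by (intro lin_add_ops lin_scale_ops lin_comp[OF lin_create] lin_eigen_part)

lemma A_op_eigen_part:
  assumes "finite V" and "v \<in> V"
  shows "A_op V v (eigen_part V v p s g) = eigen_part V v p s g"
proof -
  have "A_op V v (\<lambda>u. (A_op V v g u + s * alpha_op V v g u) / 2) =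
      (\<lambda>u. (A_op V v g u + s * alpha_op V v g u) / 2)"
    by (rule ext) (simp add: lin_add[OF lin_A_op[OF assms(1)]] lin_scale[OF lin_A_op[OF assms(1)]] lin_half[OF lin_A_op[OF assms(1)]]
        A_op_idem[OF assms] A_op_alpha_op[OF assms])
  then show ?thesis
    unfolding eigen_part_def A_op_parity_part[OF assms(1)] by simp
qed

lemma alpha_op_eigen_part:
  assumes "finite V" and "v \<in> V"
  shows "alpha_op V v (eigen_part V v p s g) = (\<lambda>u. 0)"
proof -
  have "alpha_op V v (\<lambda>u. (A_op V v g u + s * alpha_op V v g u) / 2) = (\<lambda>u. 0)"
    by (rule ext) (simp add: lin_add[OF lin_alpha_op[OF assms(1)]] lin_scale[OF lin_alpha_op[OF assms(1)]] lin_half[OF lin_alpha_op[OF assms(1)]]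
        alpha_op_A_op[OF assms] alpha_op_alpha_op[OF assms])
  then show ?thesis
    unfolding eigen_part_def alpha_op_parity_part[OF assms(1)] by (simp add: parity_part_def)
qed

lemma eigen_part_same_vertex:
  assumes "finite V" and "v \<in> V"
  shows "eigen_part V v p s (eigen_proj V v q s' g) =
    (if p = q then (\<lambda>u. (1 + s * s') / 2 * eigen_part V v q s' g u) else (\<lambda>u. 0))"
proof -
  define h where "h = eigen_part V v q s' g"
  note linA = lin_A_op[OF assms(1)] and lin\<alpha> = lin_alpha_op[OF assms(1)]
  have Ah: "A_op V v h = h" and \<alpha>h: "alpha_op V v h = (\<lambda>u. 0)"
    unfolding h_def by (rule A_op_eigen_part[OF assms] alpha_op_eigen_part[OF assms])+
  have \<alpha>Lh: "alpha_op V v (create v h) = h"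
    by (rule ext) (simp add: alpha_op_create[OF assms] Ah)
  have ALh: "A_op V v (create v h) u = 0" for u
    by (simp add: A_op_eq \<alpha>Lh)
  have "eigen_part V v p s (\<lambda>u. h u + s' * create v h u) =
      parity_part p (\<lambda>u. (1 + s * s') / 2 * h u)"
    unfolding eigen_part_def
    by (simp add: lin_add[OF linA] lin_scale[OF linA] lin_add[OF lin\<alpha>] lin_scale[OF lin\<alpha>]
        Ah \<alpha>h \<alpha>Lh ALh algebra_simps add_divide_distrib)
  also have "\<dots> = (if p = q then (\<lambda>u. (1 + s * s') / 2 * h u) else (\<lambda>u. 0))"
    unfolding h_def eigen_part_def by (auto simp: fun_eq_iff parity_part_def)
  finally show ?thesis
    unfolding eigen_proj_def h_def[symmetric] .
qed

lemma eigen_part_other_vertex: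
  assumes "finite V" and "v \<in> V" and "w \<in> V" and "v \<noteq> w" and "s * s = 1"
  shows "eigen_part V v p s (eigen_proj V w p s g) = (\<lambda>u. 0)"
proof -
  define X where "X = (\<lambda>u. (A_op V w g u + s * alpha_op V w g u) / 2)"
  define h where "h = eigen_part V w p s g"
  note linA = lin_A_op[OF assms(1)] and lin\<alpha> = lin_alpha_op[OF assms(1)]
  have h: "h = parity_part p X"
    unfolding h_def eigen_part_def X_def ..
  have Ah: "A_op V w h = h"
    unfolding h_def by (rule A_op_eigen_part[OF assms(1,3)])
  have \<alpha>Lh: "alpha_op V v (create w h) u = - A_op V v h u" for u
    using assms(4) by (simp add: alpha_op_create[OF assms(1,3)] Ah)
  have "eigen_part V v p s (\<lambda>u. h u + s * create w h u) u = 0" for u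
  proof (cases "even (length u) = p")
    case True
    have "create w h u = 0" and "create v (A_op V v h) u = 0" and "alpha_op V v h u = 0"
      using True unfolding h create_parity_part A_op_parity_part[OF assms(1)]
        alpha_op_parity_part[OF assms(1)] by (simp_all add: parity_part_def)
    moreover have "alpha_op V v (create w h) = (\<lambda>u. - A_op V v h u)"
      by (rule ext) (rule \<alpha>Lh)
    ultimately have "A_op V v (create w h) u = 0"
      unfolding A_op_eq[of V v "create w h"] by (cases u) (auto split: if_splits)
    then show ?thesis
      using True \<open>alpha_op V v h u = 0\<close> assms(5)
      by (simp add: eigen_part_def parity_part_def lin_add[OF linA] lin_scale[OF linA]
          lin_add[OF lin\<alpha>] lin_scale[OF lin\<alpha>] \<alpha>Lh algebra_simps)
  qed (simp add: eigen_part_def parity_part_def)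
  then show ?thesis
    unfolding eigen_proj_def h_def by (simp add: fun_eq_iff)
qed

lemma eigen_proj_sum:
  "eigen_proj V v True 1 g u + eigen_proj V v True (-1) g u +
   eigen_proj V v False 1 g u + eigen_proj V v False (-1) g u = g u"
proof (cases u)
  case Nil
  then show ?thesis
    by (simp add: eigen_proj_def eigen_part_def parity_part_def A_op_Nil field_simps)
next
  case (Cons x u')
  then show ?thesis
    unfolding eigen_proj_def eigen_part_def parity_part_def
    by (cases "even (length u')") (auto simp: A_op_Cons field_simps)
qed

lemma eigen_proj_eq_zero: "eigen_part V v p s g = (\<lambda>u. 0) \<Longrightarrow> eigen_proj V v p s g = (\<lambda>u. 0)"
  by (simp add: eigen_proj_def create_zero)

definition colour_proj :: "'v set \<Rightarrow> 'v \<Rightarrow> nat \<Rightarrow> 'v list vec \<Rightarrow> 'v list vec" where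
  "colour_proj V v a = eigen_proj V v (a < 2) (if even a then 1 else -1)"

lemma lin_colour_proj: "finite V \<Longrightarrow> lin (colour_proj V v a)"
  unfolding colour_proj_def by (rule lin_eigen_proj)

lemma colour_proj_sum: "(\<Sum>a<4. colour_proj V v a g u) = g u"
  using eigen_proj_sum[of V v g u] by (simp add: lessThan_4 colour_proj_def algebra_simps)

lemma colour_proj_orth:
  assumes "finite V" and "v \<in> V" and "a < 4" and "b < 4" and "a \<noteq> b"
  shows "colour_proj V v a (colour_proj V v b g) = (\<lambda>u. 0)"
proof -
  have "(a < 2) \<noteq> (b < 2) \<or> (if even a then 1 else -1) * (if even b then 1 else -1) = (-1 :: complex)"
  proof -
    have "a \<in> {0, 1, 2, 3}" and "b \<in> {0, 1, 2, 3}"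
      using assms(3,4) by (simp_all only: lessThan_4[symmetric] lessThan_iff)
    then show ?thesis using assms(5) by auto
  qed
  then show ?thesis
    unfolding colour_proj_def
    by (auto intro!: eigen_proj_eq_zero simp: eigen_part_same_vertex[OF assms(1,2)])
qed

lemma colour_proj_other_vertex:
  assumes "finite V" and "v \<in> V" and "w \<in> V" and "v \<noteq> w"
  shows "colour_proj V v a (colour_proj V w a g) = (\<lambda>u. 0)"
  unfolding colour_proj_def by (intro eigen_proj_eq_zero eigen_part_other_vertex assms) simp

theorem mainTheorem1:
  fixes V :: "'v set" and E :: "('v \<times> 'v) set"
  assumes "is_graph V E"
  shows "hom_alg_nonzero V E 4 (K_edges 4) \<and> gone \<notin> hom_ideal V E 4 (K_edges 4) \<and> chi_alg V E \<le> 4"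
proof -
  have fin: "finite V" and loopless: "\<And>v. (v, v) \<notin> E"
    using assms by (simp_all add: is_graph_def)
  interpret four_projections V "colour_proj V"
    using fin by unfold_locales (simp_all add: lin_colour_proj colour_proj_sum colour_proj_orth)
  have gone_notin: "gone \<notin> hom_ideal V E 4 (K_edges 4)"
    using loopless colour_proj_other_vertex[OF fin] by (rule gone_notin_hom_ideal)
  moreover have "gone \<in> galg V 4"
    by (auto simp: galg_def gone_def gelem_def reduced_word_def)
  ultimately have nonzero: "hom_alg_nonzero V E 4 (K_edges 4)"
    unfolding hom_alg_nonzero_def by blast
  then have "chi_alg V E \<le> 4"
    unfolding chi_alg_def by (intro Least_le) simp
  with nonzero gone_notin show ?thesis by blast
qed

end
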